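(* If $Q$ is a Jordan loop and $x\in Q$, then $(x^{2^n})^{-1}=(x^{-1})^{2^n}$ for every integer $n\ge 0$.
   Context: A loop is a set $Q$ with a binary operation (juxtaposition) and neutral element $e$ such that for all $a,b$ the equations $ax=b$, $ya=b$ have unique solutions. A Jordan loop is a commutative loop satisfying $x^2(yx)=(x^2y)x$. For $y\in Q$ and $k\ge 0$, $y^k$ denotes the right-associated product $y(y(\cdots(ye)\cdots))$ with $k$ factors $y$. Since the loop is commutative, each $x$ has a unique inverse $x^{-1}$ with $xx^{-1}=x^{-1}x=e$. *)

theory Defs
  imports Main
begin

definition loop :: "'a set \<Rightarrow> ('a \<Rightarrow> 'a \<Rightarrow> 'a) \<Rightarrow> 'a \<Rightarrow> bool" where
  "loop Q m e \<longleftrightarrow>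
     e \<in> Q \<and>
     (\<forall>a\<in>Q. \<forall>b\<in>Q. m a b \<in> Q) \<and>
     (\<forall>a\<in>Q. m e a = a \<and> m a e = a) \<and>
     (\<forall>a\<in>Q. \<forall>b\<in>Q. \<exists>!x. x \<in> Q \<and> m a x = b) \<and>
     (\<forall>a\<in>Q. \<forall>b\<in>Q. \<exists>!y. y \<in> Q \<and> m y a = b)"

definition jordan_loop :: "'a set \<Rightarrow> ('a \<Rightarrow> 'a \<Rightarrow> 'a) \<Rightarrow> 'a \<Rightarrow> bool" where
  "jordan_loop Q m e \<longleftrightarrow>
     loop Q m e \<and>
     (\<forall>a\<in>Q. \<forall>b\<in>Q. m a b = m b a) \<and>
     (\<forall>x\<in>Q. \<forall>y\<in>Q. m (m x x) (m y x) = m (m (m x x) y) x)"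

primrec lpow :: "('a \<Rightarrow> 'a \<Rightarrow> 'a) \<Rightarrow> 'a \<Rightarrow> 'a \<Rightarrow> nat \<Rightarrow> 'a" where
  "lpow m e y 0 = e"
| "lpow m e y (Suc k) = m y (lpow m e y k)"

definition linv :: "'a set \<Rightarrow> ('a \<Rightarrow> 'a \<Rightarrow> 'a) \<Rightarrow> 'a \<Rightarrow> 'a \<Rightarrow> 'a" where
  "linv Q m e x = (THE z. z \<in> Q \<and> m x z = e \<and> m z x = e)"

end

theory Submission
  imports Defs
begin

text \<open>Squaring commutes with inversion: the Jordan identity gives x^2 x^-1 = x, and
applied to x^-1 and x^2 it then gives (x^-1)^2 x^2 = e. The Jordan identity also yields
x^2 x^j = x^(j+2), hence x^(2k) = (x^2)^k; so x^(2^n) is obtained from x by squaring n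
times, and induction on n finishes the proof.\<close>

locale loop_on =
  fixes Q :: "'a set" and m :: "'a \<Rightarrow> 'a \<Rightarrow> 'a" and e :: 'a
  assumes loop: "loop Q m e"
begin

lemma unit_closed: "e \<in> Q"
  using loop by (simp add: loop_def)

lemma mult_closed: "a \<in> Q \<Longrightarrow> b \<in> Q \<Longrightarrow> m a b \<in> Q"
  using loop by (simp add: loop_def)

lemma left_unit: "a \<in> Q \<Longrightarrow> m e a = a"
  using loop by (simp add: loop_def)

lemma right_unit: "a \<in> Q \<Longrightarrow> m a e = a"
  using loop by (simp add: loop_def)

lemma right_cancel:
  assumes "a \<in> Q" "y \<in> Q" "z \<in> Q" "m y a = m z a"
  shows "y = z"
proof -
  have "\<exists>!w. w \<in> Q \<and> m w a = m y a"
    using loop assms(1,2) mult_closed by (simp add: loop_def)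
  then show ?thesis
    using assms(2-4) by (metis (no_types, lifting))
qed

lemma right_inverse_exists:
  assumes "a \<in> Q"
  shows "\<exists>z\<in>Q. m a z = e"
proof -
  have "\<exists>!z. z \<in> Q \<and> m a z = e"
    using loop assms unit_closed by (simp add: loop_def)
  then show ?thesis
    by blast
qed

lemma lpow_closed: "x \<in> Q \<Longrightarrow> lpow m e x k \<in> Q"
  by (induction k) (simp_all add: unit_closed mult_closed)

end

locale jordan_loop_on =
  fixes Q :: "'a set" and m :: "'a \<Rightarrow> 'a \<Rightarrow> 'a" and e :: 'a
  assumes jordan: "jordan_loop Q m e"
begin

sublocale loop_on
  using jordan by unfold_locales (simp add: jordan_loop_def)

lemma commute: "a \<in> Q \<Longrightarrow> b \<in> Q \<Longrightarrow> m a b = m b a"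
  using jordan by (simp add: jordan_loop_def)

lemma jordan_identity:
  assumes "x \<in> Q" "y \<in> Q"
  shows "m (m x x) (m y x) = m (m (m x x) y) x"
  using jordan assms unfolding jordan_loop_def by blast

lemma linv_eqI:
  assumes "x \<in> Q" "z \<in> Q" "m x z = e"
  shows "linv Q m e x = z"
  unfolding linv_def
proof (rule the_equality)
  show "z \<in> Q \<and> m x z = e \<and> m z x = e"
    using assms commute by simp
  fix w assume w: "w \<in> Q \<and> m x w = e \<and> m w x = e"
  then have "m w x = m z x"
    using assms commute by simp
  then show "w = z"
    using right_cancel assms(1,2) w by blast
qed

lemma
  assumes "x \<in> Q"
  shows linv_closed: "linv Q m e x \<in> Q"
    and right_inverse: "m x (linv Q m e x) = e"
    and left_inverse: "m (linv Q m e x) x = e"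
proof -
  obtain z where "z \<in> Q" "m x z = e"
    using right_inverse_exists assms by blast
  with linv_eqI[OF assms] show "linv Q m e x \<in> Q" "m x (linv Q m e x) = e"
      "m (linv Q m e x) x = e"
    using assms commute by auto
qed

lemma square_mult_inverse:
  assumes u: "u \<in> Q" and v: "v \<in> Q" "m v u = e"
  shows "m (m u u) v = u"
proof -
  have uu: "m u u \<in> Q"
    using u mult_closed by simp
  have "m (m (m u u) v) u = m (m u u) (m v u)"
    using jordan_identity[OF u v(1)] by simp
  also have "\<dots> = m u u"
    using v right_unit[OF uu] by simp
  finally show ?thesis
    using right_cancel[OF u mult_closed[OF uu v(1)] u] by simp
qed

lemma linv_square:
  assumes x: "x \<in> Q"
  shows "linv Q m e (m x x) = m (linv Q m e x) (linv Q m e x)"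
proof -
  define a where "a = linv Q m e x"
  have a: "a \<in> Q" "m x a = e" "m a x = e"
    using a_def x linv_closed right_inverse left_inverse by auto
  have xx: "m x x \<in> Q" and aa: "m a a \<in> Q"
    using x a mult_closed by auto
  have "m (m (m a a) (m x x)) a = m (m a a) (m (m x x) a)"
    using jordan_identity[OF a(1) xx] by simp
  also have "\<dots> = m (m a a) x"
    using square_mult_inverse[OF x a(1,3)] by simp
  also have "\<dots> = m e a"
    using square_mult_inverse[OF a(1) x a(2)] left_unit[OF a(1)] by simp
  finally have "m (m a a) (m x x) = e"
    using right_cancel[OF a(1) mult_closed[OF aa xx] unit_closed] by simp
  then show ?thesis
    using linv_eqI[OF xx aa] commute[OF aa xx] a_def by simp
qed

lemma square_mult_lpow:
  assumes x: "x \<in> Q"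
  shows "m (m x x) (lpow m e x j) = lpow m e x (j + 2)"
proof (induction j)
  case 0
  then show ?case
    using x right_unit mult_closed by simp
next
  case (Suc j)
  have p: "lpow m e x j \<in> Q" and xx: "m x x \<in> Q"
    using x lpow_closed mult_closed by auto
  have "m (m x x) (lpow m e x (Suc j)) = m (m x x) (m (lpow m e x j) x)"
    using commute[OF x p] by simp
  also have "\<dots> = m (m (m x x) (lpow m e x j)) x"
    using jordan_identity[OF x p] .
  also have "\<dots> = m x (m (m x x) (lpow m e x j))"
    using commute xx p x mult_closed by simp
  finally show ?case
    using Suc by simp
qed

lemma lpow_double:
  assumes "x \<in> Q"
  shows "lpow m e x (2 * k) = lpow m e (m x x) k"
proof (induction k)
  case 0
  then show ?case by simp
next
  case (Suc k)
  have "lpow m e x (2 * Suc k) = m (m x x) (lpow m e x (2 * k))"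
    using square_mult_lpow[OF assms, of "2 * k"] by simp
  then show ?case
    using Suc by simp
qed

lemma linv_lpow_power_of_two:
  "x \<in> Q \<Longrightarrow> linv Q m e (lpow m e x (2 ^ n)) = lpow m e (linv Q m e x) (2 ^ n)"
proof (induction n arbitrary: x)
  case 0
  then show ?case
    using linv_closed right_unit by simp
next
  case (Suc n)
  have "linv Q m e (lpow m e x (2 ^ Suc n)) = linv Q m e (lpow m e (m x x) (2 ^ n))"
    using lpow_double[OF Suc.prems] by simp
  also have "\<dots> = lpow m e (m (linv Q m e x) (linv Q m e x)) (2 ^ n)"
    using Suc mult_closed linv_square by simp
  also have "\<dots> = lpow m e (linv Q m e x) (2 ^ Suc n)"
    using lpow_double[OF linv_closed[OF Suc.prems]] by simp
  finally show ?case .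
qed

end

theorem lemma2p6:
  fixes Q :: "'a set" and m :: "'a \<Rightarrow> 'a \<Rightarrow> 'a" and e x :: 'a and n :: nat
  assumes "jordan_loop Q m e" and "x \<in> Q"
  shows "linv Q m e (lpow m e x (2 ^ n)) = lpow m e (linv Q m e x) (2 ^ n)"
proof -
  interpret jordan_loop_on Q m e
    using assms(1) by unfold_locales
  show ?thesis
    using linv_lpow_power_of_two[OF assms(2)] .
qed

end
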